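(* Let $\mathfrak g$ be of type $G_2$ and $\lambda,\mu\in P^+$ with $n_2=\mu(h_2)=0$. Then there exists a bijection $\mathcal S^{G}_{\lambda,\mu}\to\mathcal T^{G}_{\lambda,\mu}$.
   Context: $\alpha_1$ is the short simple root; $m_i=\lambda(h_i)$, $n_1=\mu(h_1)$ are non-negative integers, $n_2=0$. $\mathcal S^{G}_{\lambda,\mu}=\{(a,b,c,d,e,f)\in\mathbb Z_+^6: a\le\min\{m_1,n_1\},\ b\le m_2+n_2,\ f\le\min\{m_2,n_2\},\ b+e-a\le m_2+n_2,\ a+c+d\le\min\{m_1+m_2,n_1+n_2\},\ a+b+c\le\min\{m_1+m_2,n_1+n_2\},\ a+b+c+d\le\min\{m_1+2m_2,n_1+2n_2\},\ b+c+d+e\le\min\{m_1+2m_2,n_1+2n_2\},\ 2(a+c)+3d-b\le m_1+n_1,\ 2(a+c)+b+d\le m_1+n_1\}$. $\mathcal T^{G}_{\lambda,\mu}=\{(a,b,c,d,e,f)\in\mathbb Z_+^6: a+b+c+d+e+f\le n_1,\ c\le1,\ b+e-d\le m_2,\ f\le m_1,\ e\le m_2,\ a-2b+2d-e+f\le m_1,\ c+f+2d-e\le m_1\}$. *)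

theory Defs
  imports Main
begin

text \<open>Tuples (a,b,c,d,e,f) of non-negative integers. Parameters:
  m1 = lambda(h_1), m2 = lambda(h_2), n1 = mu(h_1), n2 = mu(h_2).\<close>

definition S_G :: "nat \<Rightarrow> nat \<Rightarrow> nat \<Rightarrow> nat \<Rightarrow> (int \<times> int \<times> int \<times> int \<times> int \<times> int) set" where
  "S_G m1 m2 n1 n2 = {(a,b,c,d,e,f).
     0 \<le> a \<and> 0 \<le> b \<and> 0 \<le> c \<and> 0 \<le> d \<and> 0 \<le> e \<and> 0 \<le> f \<and>
     a \<le> min (int m1) (int n1) \<and>
     b \<le> int m2 + int n2 \<and>
     f \<le> min (int m2) (int n2) \<and>
     b + e - a \<le> int m2 + int n2 \<and>
     a + c + d \<le> min (int m1 + int m2) (int n1 + int n2) \<and>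
     a + b + c \<le> min (int m1 + int m2) (int n1 + int n2) \<and>
     a + b + c + d \<le> min (int m1 + 2 * int m2) (int n1 + 2 * int n2) \<and>
     b + c + d + e \<le> min (int m1 + 2 * int m2) (int n1 + 2 * int n2) \<and>
     2 * (a + c) + 3 * d - b \<le> int m1 + int n1 \<and>
     2 * (a + c) + b + d \<le> int m1 + int n1}"

definition T_G :: "nat \<Rightarrow> nat \<Rightarrow> nat \<Rightarrow> (int \<times> int \<times> int \<times> int \<times> int \<times> int) set" where
  "T_G m1 m2 n1 = {(a,b,c,d,e,f).
     0 \<le> a \<and> 0 \<le> b \<and> 0 \<le> c \<and> 0 \<le> d \<and> 0 \<le> e \<and> 0 \<le> f \<and>
     a + b + c + d + e + f \<le> int n1 \<and>
     c \<le> 1 \<and>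
     b + e - d \<le> int m2 \<and>
     f \<le> int m1 \<and>
     e \<le> int m2 \<and>
     a - 2 * b + 2 * d - e + f \<le> int m1 \<and>
     c + f + 2 * d - e \<le> int m1}"

end

theory Submission
  imports Defs
begin

text \<open>
  Put \<open>p = min a e\<close>, \<open>k = min b d\<close>, and let \<open>t = max 0 (c + 2(d - k) - (m1 + e - a - p))\<close>
  be the amount by which \<open>c + 2(d - k)\<close> overflows \<open>m1 + e - a - p\<close>. Writing \<open>c - t = 2h + r\<close>
  with \<open>r \<in> {0,1}\<close> (so \<open>h\<close> is negative when \<open>t > c\<close>), the bijection sends \<open>(a,b,c,d,e,0)\<close> to
  \<open>(a - p + k + t, b - k + t + h, r, d - k + h, e - p + k, p)\<close>.
  The overflow can be read off the image as \<open>max 0 (A + F + C + 2D - m1 - E)\<close>, and then \<open>p = F\<close>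
  and \<open>k = min (A - t) E\<close>, so the inverse is again an explicit formula and the two maps are
  mutually inverse for purely algebraic reasons.
\<close>

definition S_to_T :: "int \<Rightarrow> int \<times> int \<times> int \<times> int \<times> int \<times> int \<Rightarrow> int \<times> int \<times> int \<times> int \<times> int \<times> int" where
  "S_to_T m = (\<lambda>(a,b,c,d,e,f).
     let p = min a e; k = min b d; t = max 0 (c + 2 * (d - k) - (m + e - a - p))
     in (a - p + k + t, b - k + t + (c - t) div 2, (c - t) mod 2, d - k + (c - t) div 2, e - p + k, p))"

definition T_to_S :: "int \<Rightarrow> int \<times> int \<times> int \<times> int \<times> int \<times> int \<Rightarrow> int \<times> int \<times> int \<times> int \<times> int \<times> int" where
  "T_to_S m = (\<lambda>(A,B,C,D,E,F).
     let t = max 0 (A + F + C + 2 * D - m - E); k = min (A - t) E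
     in (A - t - k + F, max (B - D - t) 0 + k, C + 2 * min D (B - t) + t, max (D + t - B) 0 + k, E - k + F, 0))"

lemma T_to_S_S_to_T: "T_to_S m (S_to_T m (a,b,c,d,e,0)) = (a,b,c,d,e,0)"
proof -
  define p where "p = min a e"
  define k where "k = min b d"
  define t where "t = max 0 (c + 2 * (d - k) - (m + e - a - p))"
  define h where "h = (c - t) div 2"
  define r where "r = (c - t) mod 2"
  have c: "c = 2 * h + r + t"
    unfolding h_def r_def by simp
  have image: "S_to_T m (a,b,c,d,e,0) = (a - p + k + t, b - k + t + h, r, d - k + h, e - p + k, p)"
    by (simp add: S_to_T_def Let_def p_def k_def t_def h_def r_def)
  have "a - p + k + t + p + r + 2 * (d - k + h) - m - (e - p + k) = c + 2 * (d - k) - (m + e - a - p)"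
    unfolding c by (simp add: algebra_simps)
  then have t: "max 0 (a - p + k + t + p + r + 2 * (d - k + h) - m - (e - p + k)) = t"
    by (simp only: t_def)
  have k: "min (a - p + k + t - t) (e - p + k) = k"
    by (simp add: p_def min_def)
  show ?thesis
    unfolding image T_to_S_def Let_def prod.case t k
    using c by (auto simp: p_def k_def min_def max_def)
qed

lemma S_to_T_T_to_S:
  assumes "0 \<le> C" "C \<le> 1"
  shows "S_to_T m (T_to_S m (A,B,C,D,E,F)) = (A,B,C,D,E,F)"
proof -
  define t where "t = max 0 (A + F + C + 2 * D - m - E)"
  define k where "k = min (A - t) E"
  define \<delta> where "\<delta> = max (D + t - B) 0"
  have image: "T_to_S m (A,B,C,D,E,F) = (A - t - k + F, max (B - D - t) 0 + k, C + 2 * (D - \<delta>) + t, \<delta> + k, E - k + F, 0)"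
    by (simp add: T_to_S_def Let_def t_def k_def \<delta>_def min_def max_def)
  have p: "min (A - t - k + F) (E - k + F) = F"
    by (simp add: k_def min_def)
  have k: "min (max (B - D - t) 0 + k) (\<delta> + k) = k"
    by (simp add: \<delta>_def min_def max_def)
  have t: "max 0 (C + 2 * (D - \<delta>) + t + 2 * (\<delta> + k - k) - (m + (E - k + F) - (A - t - k + F) - F)) = t"
    unfolding t_def by (simp add: algebra_simps)
  have "(C + 2 * (D - \<delta>) + t - t) div 2 = D - \<delta>" "(C + 2 * (D - \<delta>) + t - t) mod 2 = C"
    using assms by presburger+
  then show ?thesis
    unfolding image S_to_T_def Let_def prod.case p k t
    by (simp add: \<delta>_def max_def)
qed

lemma mem_S_G_zero_iff:
  "(a,b,c,d,e,f) \<in> S_G m1 m2 n1 0 \<longleftrightarrow>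
     0 \<le> a \<and> 0 \<le> b \<and> 0 \<le> c \<and> 0 \<le> d \<and> 0 \<le> e \<and> f = 0 \<and>
     a \<le> int m1 \<and> a \<le> int n1 \<and> b \<le> int m2 \<and> b + e - a \<le> int m2 \<and>
     a + c + d \<le> int m1 + int m2 \<and> a + c + d \<le> int n1 \<and>
     a + b + c \<le> int m1 + int m2 \<and> a + b + c \<le> int n1 \<and>
     a + b + c + d \<le> int m1 + 2 * int m2 \<and> a + b + c + d \<le> int n1 \<and>
     b + c + d + e \<le> int m1 + 2 * int m2 \<and> b + c + d + e \<le> int n1 \<and>
     2 * (a + c) + 3 * d - b \<le> int m1 + int n1 \<and> 2 * (a + c) + b + d \<le> int m1 + int n1"
  by (auto simp: S_G_def)

lemma S_to_T_in_T:
  assumes "(a,b,c,d,e,f) \<in> S_G m1 m2 n1 0"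
  shows "S_to_T (int m1) (a,b,c,d,e,f) \<in> T_G m1 m2 n1"
proof -
  note S = assms[unfolded mem_S_G_zero_iff]
  define p where "p = min a e"
  define k where "k = min b d"
  define t where "t = max 0 (c + 2 * (d - k) - (int m1 + e - a - p))"
  define h where "h = (c - t) div 2"
  define r where "r = (c - t) mod 2"
  have c: "c - t = 2 * h + r" "0 \<le> r" "r \<le> 1"
    unfolding h_def r_def by auto
  have image: "S_to_T (int m1) (a,b,c,d,e,f) = (a - p + k + t, b - k + t + h, r, d - k + h, e - p + k, p)"
    by (simp add: S_to_T_def Let_def p_def k_def t_def h_def r_def)
  have p: "p \<le> a" "p \<le> e" "p = a \<or> p = e"
    unfolding p_def by auto
  have k: "k \<le> b" "k \<le> d" "k = b \<or> k = d"
    unfolding k_def by auto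
  have t: "0 \<le> t" "c + 2 * (d - k) - (int m1 + e - a - p) \<le> t"
    "t = 0 \<or> t = c + 2 * (d - k) - (int m1 + e - a - p)"
    unfolding t_def by auto
  show ?thesis
    unfolding image T_G_def mem_Collect_eq prod.case
    using S c p k t by smt
qed

lemma T_to_S_in_S:
  assumes "(A,B,C,D,E,F) \<in> T_G m1 m2 n1"
  shows "T_to_S (int m1) (A,B,C,D,E,F) \<in> S_G m1 m2 n1 0"
proof -
  note T = assms[unfolded T_G_def mem_Collect_eq prod.case]
  define t where "t = max 0 (A + F + C + 2 * D - int m1 - E)"
  define k where "k = min (A - t) E"
  define \<beta> where "\<beta> = max (B - D - t) 0"
  define \<delta> where "\<delta> = max (D + t - B) 0"
  have image: "T_to_S (int m1) (A,B,C,D,E,F) = (A - t - k + F, \<beta> + k, C + 2 * (D - \<delta>) + t, \<delta> + k, E - k + F, 0)"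
    by (simp add: T_to_S_def Let_def t_def k_def \<beta>_def \<delta>_def min_def max_def)
  have t: "0 \<le> t" "A + F + C + 2 * D - int m1 - E \<le> t" "t = 0 \<or> t = A + F + C + 2 * D - int m1 - E"
    unfolding t_def by auto
  have k: "k \<le> A - t" "k \<le> E" "k = A - t \<or> k = E"
    unfolding k_def by auto
  have \<beta>\<delta>: "0 \<le> \<beta>" "0 \<le> \<delta>" "\<beta> - \<delta> = B - D - t" "\<beta> = 0 \<or> \<delta> = 0"
    unfolding \<beta>_def \<delta>_def by auto
  show ?thesis
    unfolding image mem_S_G_zero_iff
    using T t k \<beta>\<delta> by smt
qed

theorem lemma6p6:
  fixes m1 m2 n1 n2 :: nat
  assumes "n2 = 0"
  shows "\<exists>g. bij_betw g (S_G m1 m2 n1 n2) (T_G m1 m2 n1)"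
proof -
  have "bij_betw (S_to_T (int m1)) (S_G m1 m2 n1 0) (T_G m1 m2 n1)"
  proof (rule bij_betw_byWitness[where f' = "T_to_S (int m1)"])
    show "\<forall>x\<in>S_G m1 m2 n1 0. T_to_S (int m1) (S_to_T (int m1) x) = x"
      by (clarsimp simp: split_paired_all mem_S_G_zero_iff T_to_S_S_to_T)
    show "\<forall>y\<in>T_G m1 m2 n1. S_to_T (int m1) (T_to_S (int m1) y) = y"
      by (clarsimp simp: split_paired_all T_G_def S_to_T_T_to_S)
    show "S_to_T (int m1) ` S_G m1 m2 n1 0 \<subseteq> T_G m1 m2 n1"
      by (clarsimp simp: split_paired_all S_to_T_in_T)
    show "T_to_S (int m1) ` T_G m1 m2 n1 \<subseteq> S_G m1 m2 n1 0"
      by (clarsimp simp: split_paired_all T_to_S_in_S)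
  qed
  with assms show ?thesis
    by blast
qed

end
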